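(* Let $1\le p\le 2$, let $\rho>0$ and $\alpha\ge 0$ with $\alpha\le\frac{\pi}{2}-3\rho$, and set $\theta_2=\frac{\pi}{2}+\rho$, $\theta_3=2\rho+\alpha$. Define $E_p(\theta)=|\cos(\theta-\theta_2)|^p+|\cos(\theta-\theta_3)|^p$. Then for every $\theta=2\rho+\alpha+\beta$ with $0\le\beta\le\frac{\pi}{2}-3\rho-\alpha$ we have $E_p(\theta)\ge 1$. *)

theory Defs
  imports Complex_Main
begin

definition E_p :: "real \<Rightarrow> real \<Rightarrow> real \<Rightarrow> real \<Rightarrow> real" where
  "E_p p \<theta>2 \<theta>3 \<theta> = \<bar>cos (\<theta> - \<theta>2)\<bar> powr p + \<bar>cos (\<theta> - \<theta>3)\<bar> powr p"

end

theory Submission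
  imports Defs
begin

text \<open>
  Write \<open>s = \<rho> + \<alpha> + \<beta>\<close>. Then \<open>\<theta> - \<theta>3 = \<beta>\<close> and \<open>cos (\<theta> - \<theta>2) = sin s\<close> with
  \<open>\<beta> \<le> s \<le> pi / 2\<close>, so \<open>|cos (\<theta> - \<theta>2)| \<ge> sin \<beta>\<close>. Since \<open>|x| powr p \<ge> x\<^sup>2\<close> for \<open>|x| \<le> 1\<close>
  and \<open>p \<le> 2\<close>, we get \<open>E_p \<ge> sin\<^sup>2 \<beta> + cos\<^sup>2 \<beta> = 1\<close>.
\<close>

lemma power2_le_abs_powr:
  fixes x p :: real
  assumes "\<bar>x\<bar> \<le> 1" and "p \<le> 2"
  shows "x\<^sup>2 \<le> \<bar>x\<bar> powr p"
proof -
  have "x\<^sup>2 = \<bar>x\<bar> powr 2"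
    by (cases "x = 0") (simp_all add: powr_numeral)
  also have "\<dots> \<le> \<bar>x\<bar> powr p"
    using assms by (intro powr_mono') simp_all
  finally show ?thesis .
qed

lemma one_le_abs_powr_add_abs_cos_powr:
  fixes u b p :: real
  assumes "\<bar>sin b\<bar> \<le> \<bar>u\<bar>" and "\<bar>u\<bar> \<le> 1" and "p \<le> 2"
  shows "1 \<le> \<bar>u\<bar> powr p + \<bar>cos b\<bar> powr p"
proof -
  have "1 = (sin b)\<^sup>2 + (cos b)\<^sup>2"
    by simp
  also have "\<dots> \<le> u\<^sup>2 + (cos b)\<^sup>2"
    using assms(1) abs_le_square_iff[of "sin b" u] by linarith
  also have "\<dots> \<le> \<bar>u\<bar> powr p + \<bar>cos b\<bar> powr p"
    using power2_le_abs_powr[OF assms(2,3)] power2_le_abs_powr[OF abs_cos_le_one[of b] assms(3)]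
    by linarith
  finally show ?thesis .
qed

theorem lemma2p11:
  fixes p \<rho> \<alpha> \<beta> \<theta>2 \<theta>3 \<theta> :: real
  assumes "1 \<le> p" and "p \<le> 2"
    and "\<rho> > 0" and "\<alpha> \<ge> 0" and "\<alpha> \<le> pi / 2 - 3 * \<rho>"
    and "\<theta>2 = pi / 2 + \<rho>" and "\<theta>3 = 2 * \<rho> + \<alpha>"
    and "0 \<le> \<beta>" and "\<beta> \<le> pi / 2 - 3 * \<rho> - \<alpha>"
    and "\<theta> = 2 * \<rho> + \<alpha> + \<beta>"
  shows "E_p p \<theta>2 \<theta>3 \<theta> \<ge> 1"
proof -
  define s where "s = \<rho> + \<alpha> + \<beta>"
  have "\<theta> - \<theta>2 = s - pi / 2"
    using assms(6,10) by (simp add: s_def)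
  then have cos_\<theta>2: "cos (\<theta> - \<theta>2) = sin s"
    by (simp add: cos_diff)
  have cos_\<theta>3: "cos (\<theta> - \<theta>3) = cos \<beta>"
    using assms(7,10) by simp
  have "\<beta> \<le> s" and "s \<le> pi / 2"
    using assms(3-5,8,9) by (auto simp: s_def)
  then have "\<bar>sin \<beta>\<bar> \<le> \<bar>sin s\<bar>"
    using assms(8) sin_ge_zero[of \<beta>] sin_monotone_2pi_le[of \<beta> s] by simp
  then show ?thesis
    unfolding E_p_def cos_\<theta>2 cos_\<theta>3
    using one_le_abs_powr_add_abs_cos_powr[OF _ abs_sin_le_one assms(2)] by simp
qed

end
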